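(* Let $\mathbf{L}$ be a distributive lattice, $n\ge1$ an integer and $F$ an upset of $\mathbf{L}$. The following are equivalent: (i) $F$ is a prime $n$-filter; (ii) $F$ is a prime upset which is a union of at most $n$ filters; (iii) $F$ is a union of at most $n$ prime filters; (iv) there is a lattice homomorphism $h\colon\mathbf{L}\to\mathbf{2}^n$ with $F=h^{-1}[P_n]$, where $\mathbf{2}^n$ is the Boolean lattice with $n$ atoms (the $n$-th power of the two-element lattice $0<1$) and $P_n$ is the set of its non-zero elements.
   Context: For a set $X$, $Y\subseteq_n X$ means $Y$ is a non-empty subset of $X$ with $|Y|\le n$. An $n$-filter on a lattice is an upset $F$ such that for every non-empty finite $X\subseteq F$: if $\bigwedge Y\in F$ for every $Y\subseteq_n X$ then $\bigwedge X\in F$. A filter is a $1$-filter, i.e. an upset closed under binary meets (the empty set and the whole lattice count as filters). An upset $F$ is prime if $a\vee b\in F$ implies $a\in F$ or $b\in F$; a prime $n$-filter (prime filter) is an $n$-filter (filter) which is a prime upset. Lattice homomorphisms need not preserve bounds. *)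

theory Defs
  imports Main
begin

(* Lattices are instances of the type class distrib_lattice (bounds not required).
   Finite non-empty meets are Inf_fin. *)

definition upset :: "'a::lattice set \<Rightarrow> bool" where
  "upset F \<longleftrightarrow> (\<forall>a b. a \<in> F \<longrightarrow> a \<le> b \<longrightarrow> b \<in> F)"

definition n_filter :: "nat \<Rightarrow> 'a::lattice set \<Rightarrow> bool" where
  "n_filter n F \<longleftrightarrow> upset F \<and>
     (\<forall>X. finite X \<and> X \<noteq> {} \<and> X \<subseteq> F \<longrightarrow>
        (\<forall>Y. Y \<subseteq> X \<and> Y \<noteq> {} \<and> card Y \<le> n \<longrightarrow> Inf_fin Y \<in> F) \<longrightarrow>
        Inf_fin X \<in> F)"

(* a filter is a 1-filter (empty set and whole lattice included) *)
definition is_filter :: "'a::lattice set \<Rightarrow> bool" where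
  "is_filter F \<longleftrightarrow> n_filter 1 F"

definition prime_upset :: "'a::lattice set \<Rightarrow> bool" where
  "prime_upset F \<longleftrightarrow> upset F \<and> (\<forall>a b. sup a b \<in> F \<longrightarrow> a \<in> F \<or> b \<in> F)"

definition prime_n_filter :: "nat \<Rightarrow> 'a::lattice set \<Rightarrow> bool" where
  "prime_n_filter n F \<longleftrightarrow> n_filter n F \<and> prime_upset F"

definition prime_filter :: "'a::lattice set \<Rightarrow> bool" where
  "prime_filter F \<longleftrightarrow> is_filter F \<and> prime_upset F"

(* The Boolean lattice 2^n, realised as the sublattice of the pointwise lattice
   nat => bool consisting of functions vanishing outside {0..<n}. *)
definition two_pow :: "nat \<Rightarrow> (nat \<Rightarrow> bool) set" where
  "two_pow n = {f. \<forall>i\<ge>n. \<not> f i}"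

definition P_set :: "nat \<Rightarrow> (nat \<Rightarrow> bool) set" where
  "P_set n = two_pow n - {bot}"

(* lattice homomorphism L -> 2^n (bounds need not be preserved) *)
definition lattice_hom_to_two_pow :: "nat \<Rightarrow> ('a::lattice \<Rightarrow> nat \<Rightarrow> bool) \<Rightarrow> bool" where
  "lattice_hom_to_two_pow n h \<longleftrightarrow> (\<forall>a. h a \<in> two_pow n) \<and>
     (\<forall>a b. h (sup a b) = sup (h a) (h b)) \<and> (\<forall>a b. h (inf a b) = inf (h a) (h b))"

end

(*
  An upset F is the union of its maximal subfilters (Zorn), and if F is a prime upset of a
  distributive lattice these are prime filters. A union of at most n filters is an n-filter:
  if the meet of X \<subseteq> F lies outside F, every filter misses some element of X, and these at
  most n witnesses already have their meet outside F.

  A prime n-filter F has at most n maximal subfilters. Given n + 1 of them, pick z(K) \<in> K with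
  z(K) \<sqinter> z(K') \<notin> F for K \<noteq> K'. The join y(K) of all z(K') with K' \<noteq> K lies in exactly
  the K' \<noteq> K, so any n of the y(K) have their meet in F; but the meet of all of them is not
  in F, since a prime subfilter of F containing it would contain two distinct z's.

  Finally, prime filters K\<^sub>1, ..., K\<^sub>m with m \<le> n give the homomorphism a \<mapsto> (i \<mapsto> a \<in> K\<^sub>i)
  into 2\<^sup>n, and the coordinate preimages of any homomorphism into 2\<^sup>n are prime filters.
*)

theory Submission imports Defs begin

lemma upsetD: "upset F \<Longrightarrow> a \<in> F \<Longrightarrow> a \<le> b \<Longrightarrow> b \<in> F"
  by (simp add: upset_def)

lemma Inf_fin_mem_if_inf_closed:
  fixes F :: "'a::lattice set"
  assumes "\<And>a b. a \<in> F \<Longrightarrow> b \<in> F \<Longrightarrow> inf a b \<in> F" "finite X" "X \<noteq> {}" "X \<subseteq> F"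
  shows "Inf_fin X \<in> F"
  using assms(2-4)
proof (induction X rule: finite_ne_induct)
  case (insert x X)
  then show ?case using assms(1) by (simp add: Inf_fin.insert)
qed simp

lemma is_filter_iff:
  "is_filter (F::'a::lattice set) \<longleftrightarrow> upset F \<and> (\<forall>a\<in>F. \<forall>b\<in>F. inf a b \<in> F)"
proof
  assume F: "is_filter F"
  have "inf a b \<in> F" if "a \<in> F" "b \<in> F" for a b
  proof -
    have "Inf_fin Y \<in> F" if "Y \<subseteq> {a, b}" "Y \<noteq> {}" "card Y \<le> 1" for Y
    proof -
      have "card Y = 1"
        using that finite_subset[OF that(1)] by (simp add: le_Suc_eq)
      then obtain y where "Y = {y}" by (rule card_1_singletonE)
      then show ?thesis using that \<open>a \<in> F\<close> \<open>b \<in> F\<close> by auto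
    qed
    then have "Inf_fin {a, b} \<in> F"
      using F that unfolding is_filter_def n_filter_def
      by (metis empty_not_insert empty_subsetI finite.emptyI finite.insertI insert_subset)
    then show ?thesis by simp
  qed
  then show "upset F \<and> (\<forall>a\<in>F. \<forall>b\<in>F. inf a b \<in> F)"
    using F by (simp add: is_filter_def n_filter_def)
next
  assume "upset F \<and> (\<forall>a\<in>F. \<forall>b\<in>F. inf a b \<in> F)"
  then show "is_filter F"
    unfolding is_filter_def n_filter_def using Inf_fin_mem_if_inf_closed by blast
qed

lemma filter_inf_iff: "is_filter G \<Longrightarrow> inf a b \<in> G \<longleftrightarrow> a \<in> G \<and> b \<in> G"
  unfolding is_filter_iff by (metis upsetD inf_le1 inf_le2)

lemma filter_Inf_fin_mem:
  "is_filter G \<Longrightarrow> finite X \<Longrightarrow> X \<noteq> {} \<Longrightarrow> X \<subseteq> G \<Longrightarrow> Inf_fin X \<in> G"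
  by (rule Inf_fin_mem_if_inf_closed) (auto simp: is_filter_iff)

lemma is_filter_atLeast: "is_filter {a::'a::lattice..}"
  by (auto simp: is_filter_iff upset_def)

lemma prime_upset_sup_iff: "prime_upset G \<Longrightarrow> sup a b \<in> G \<longleftrightarrow> a \<in> G \<or> b \<in> G"
  unfolding prime_upset_def by (metis upsetD sup_ge1 sup_ge2)

lemma prime_upset_Sup_fin:
  fixes M :: "'a::lattice set"
  assumes "prime_upset M" "finite S" "S \<noteq> {}" "Sup_fin S \<in> M"
  shows "\<exists>s\<in>S. s \<in> M"
  using assms(2-4)
proof (induction S rule: finite_ne_induct)
  case (insert x S)
  then show ?case using assms(1) unfolding prime_upset_def by (metis Sup_fin.insert insertCI)
qed simp

definition max_subfilter :: "'a::lattice set \<Rightarrow> 'a set \<Rightarrow> bool" where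
  "max_subfilter F H \<longleftrightarrow> is_filter H \<and> H \<subseteq> F \<and>
     (\<forall>H'. is_filter H' \<and> H \<subseteq> H' \<and> H' \<subseteq> F \<longrightarrow> H' = H)"

lemma is_filter_Union_chain:
  assumes "C \<noteq> {}" "\<forall>G\<in>C. is_filter G" "\<forall>X\<in>C. \<forall>Y\<in>C. X \<subseteq> Y \<or> Y \<subseteq> X"
  shows "is_filter (\<Union>C)"
  unfolding is_filter_iff upset_def
proof (intro conjI allI impI ballI)
  fix a b assume "a \<in> \<Union>C" "a \<le> b"
  then show "b \<in> \<Union>C" using assms(2) by (auto simp: is_filter_iff upset_def)
next
  fix a b assume "a \<in> \<Union>C" "b \<in> \<Union>C"
  then obtain X Y where XY: "X \<in> C" "Y \<in> C" "a \<in> X" "b \<in> Y" by blast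
  have "X \<union> Y \<in> C"
    using XY(1,2) assms(3) by (metis sup.absorb1 sup.absorb2)
  moreover have "inf a b \<in> X \<union> Y"
    using calculation XY(3,4) assms(2) filter_inf_iff by blast
  ultimately show "inf a b \<in> \<Union>C" by blast
qed

lemma ex_max_subfilter:
  fixes F G :: "'a::lattice set"
  assumes "is_filter G" "G \<subseteq> F"
  obtains H where "max_subfilter F H" "G \<subseteq> H"
proof -
  let ?A = "{H. is_filter H \<and> G \<subseteq> H \<and> H \<subseteq> F}"
  have "\<exists>M\<in>?A. \<forall>X\<in>?A. M \<subseteq> X \<longrightarrow> X = M"
  proof (rule subset_Zorn_nonempty)
    have "G \<in> ?A" using assms by simp
    then show "?A \<noteq> {}" by blast
  next
    fix C assume C: "C \<noteq> {}" "subset.chain ?A C"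
    then have "C \<subseteq> ?A" "\<forall>X\<in>C. \<forall>Y\<in>C. X \<subseteq> Y \<or> Y \<subseteq> X"
      unfolding subset_chain_def by blast+
    moreover from this have "is_filter (\<Union>C)"
      using is_filter_Union_chain[OF C(1)] by blast
    ultimately show "\<Union>C \<in> ?A" using C(1) by blast
  qed
  then obtain M where M: "M \<in> ?A" "\<forall>X\<in>?A. M \<subseteq> X \<longrightarrow> X = M" by blast
  have "max_subfilter F M"
    unfolding max_subfilter_def
  proof (intro conjI allI impI)
    fix H' assume "is_filter H' \<and> M \<subseteq> H' \<and> H' \<subseteq> F"
    then show "H' = M" using M by auto
  qed (use M in auto)
  then show ?thesis using that M by simp
qed

lemma Union_max_subfilters:
  assumes "upset (F::'a::lattice set)"
  shows "\<Union>{H. max_subfilter F H} = F"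
proof (intro equalityI subsetI)
  fix a assume "a \<in> F"
  then have "{a..} \<subseteq> F" using assms upsetD by fastforce
  then obtain H where "max_subfilter F H" "{a..} \<subseteq> H"
    using ex_max_subfilter[OF is_filter_atLeast] by blast
  then show "a \<in> \<Union>{H. max_subfilter F H}" by blast
qed (auto simp: max_subfilter_def)

lemma is_filter_join:
  fixes H K :: "'a::lattice set"
  assumes "is_filter H" "is_filter K"
  shows "is_filter {x. \<exists>c\<in>H. \<exists>d\<in>K. inf c d \<le> x}" (is "is_filter ?J")
  unfolding is_filter_iff
proof (intro conjI ballI)
  show "upset ?J"
    unfolding upset_def by (blast intro: order_trans)
next
  fix x y assume "x \<in> ?J" "y \<in> ?J"
  then obtain c1 d1 c2 d2 where cd: "c1 \<in> H" "d1 \<in> K" "inf c1 d1 \<le> x" "c2 \<in> H" "d2 \<in> K" "inf c2 d2 \<le> y"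
    by blast
  have "inf c1 c2 \<in> H" "inf d1 d2 \<in> K"
    using assms cd by (simp_all add: is_filter_iff)
  moreover have "inf (inf c1 c2) (inf d1 d2) \<le> inf c1 d1" "inf (inf c1 c2) (inf d1 d2) \<le> inf c2 d2"
    by (rule inf_mono; simp)+
  then have "inf (inf c1 c2) (inf d1 d2) \<le> inf x y"
    using cd(3,6) by (meson le_inf_iff order_trans)
  ultimately show "inf x y \<in> ?J" by blast
qed

lemma max_subfilter_incompatible:
  fixes F :: "'a::lattice set"
  assumes "upset F" "max_subfilter F H" "is_filter K" "H \<noteq> {}" "K \<noteq> {}" "\<not> K \<subseteq> H"
  shows "\<exists>c\<in>H. \<exists>d\<in>K. inf c d \<notin> F"
proof -
  let ?J = "{x. \<exists>c\<in>H. \<exists>d\<in>K. inf c d \<le> x}"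
  have H: "is_filter H" "\<And>H'. is_filter H' \<Longrightarrow> H \<subseteq> H' \<Longrightarrow> H' \<subseteq> F \<Longrightarrow> H' = H"
    using assms(2) by (simp_all add: max_subfilter_def)
  obtain c0 d0 where "c0 \<in> H" "d0 \<in> K" using assms(4,5) by blast
  then have "H \<subseteq> ?J" "K \<subseteq> ?J"
    by (auto intro: inf.coboundedI1 inf.coboundedI2)
  have "\<not> ?J \<subseteq> F"
  proof
    assume "?J \<subseteq> F"
    then have "?J = H" using H is_filter_join[OF H(1) assms(3)] \<open>H \<subseteq> ?J\<close> by simp
    then show False using \<open>K \<subseteq> ?J\<close> assms(6) by simp
  qed
  then obtain x c d where "x \<notin> F" "c \<in> H" "d \<in> K" "inf c d \<le> x" by auto
  then show ?thesis using assms(1) upsetD by blast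
qed

lemma max_subfilters_incompatible:
  fixes F :: "'a::lattice set"
  assumes "upset F" "max_subfilter F H" "max_subfilter F K" "H \<noteq> K"
  shows "\<exists>c\<in>H. \<exists>d\<in>K. inf c d \<notin> F"
proof (rule max_subfilter_incompatible)
  have "\<not> H \<subseteq> K" "\<not> K \<subseteq> H"
    using assms(2-4) unfolding max_subfilter_def by blast+
  then show "H \<noteq> {}" "K \<noteq> {}" "\<not> K \<subseteq> H" by auto
qed (use assms in \<open>auto simp: max_subfilter_def\<close>)

lemma max_subfilter_prime:
  fixes F :: "'a::distrib_lattice set"
  assumes "prime_upset F" "max_subfilter F H"
  shows "prime_filter H"
proof -
  have F: "upset F" "\<And>a b. sup a b \<in> F \<Longrightarrow> a \<in> F \<or> b \<in> F"
    using assms(1) unfolding prime_upset_def by blast+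
  have H: "is_filter H" "H \<subseteq> F"
    using assms(2) unfolding max_subfilter_def by blast+
  have "a \<in> H \<or> b \<in> H" if ab: "sup a b \<in> H" for a b
  proof (rule ccontr)
    assume "\<not> (a \<in> H \<or> b \<in> H)"
    have escape: "\<exists>h\<in>H. inf h c \<notin> F" if "c \<notin> H" for c
    proof -
      have "\<exists>h\<in>H. \<exists>d\<in>{c..}. inf h d \<notin> F"
        by (rule max_subfilter_incompatible[OF F(1) assms(2) is_filter_atLeast]) (use ab that in auto)
      then obtain h d where "h \<in> H" "c \<le> d" "inf h d \<notin> F" by auto
      moreover from this have "inf h c \<le> inf h d" by (simp add: inf.coboundedI2)
      ultimately show ?thesis using F(1) upsetD by blast
    qed
    obtain h1 h2 where h: "h1 \<in> H" "inf h1 a \<notin> F" "h2 \<in> H" "inf h2 b \<notin> F"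
      using escape \<open>\<not> (a \<in> H \<or> b \<in> H)\<close> by blast
    let ?h = "inf h1 h2"
    have "inf ?h (sup a b) \<in> F"
      using h(1,3) ab H by (auto simp: is_filter_iff)
    then have "inf ?h a \<in> F \<or> inf ?h b \<in> F"
      using F(2) by (simp add: inf_sup_distrib1)
    moreover have "inf ?h a \<le> inf h1 a" "inf ?h b \<le> inf h2 b"
      by (auto intro: le_infI1 le_infI2 inf_mono)
    ultimately show False using h F(1) upsetD by blast
  qed
  then show ?thesis
    using H(1) unfolding prime_filter_def prime_upset_def is_filter_iff by blast
qed

lemma upset_Union: "(\<And>G. G \<in> \<G> \<Longrightarrow> upset G) \<Longrightarrow> upset (\<Union>\<G>)"
  unfolding upset_def by blast

lemma prime_upset_Union: "(\<And>G. G \<in> \<G> \<Longrightarrow> prime_upset G) \<Longrightarrow> prime_upset (\<Union>\<G>)"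
  unfolding prime_upset_def using upset_Union by (metis UnionE UnionI)

lemma n_filter_Union_filters:
  fixes \<G> :: "'a::lattice set set"
  assumes "finite \<G>" "card \<G> \<le> n" "\<And>G. G \<in> \<G> \<Longrightarrow> is_filter G"
  shows "n_filter n (\<Union>\<G>)"
  unfolding n_filter_def
proof (intro conjI allI impI)
  show "upset (\<Union>\<G>)" using assms(3) upset_Union is_filter_iff by blast
next
  fix X :: "'a set"
  assume X: "finite X \<and> X \<noteq> {} \<and> X \<subseteq> \<Union>\<G>"
    and small: "\<forall>Y. Y \<subseteq> X \<and> Y \<noteq> {} \<and> card Y \<le> n \<longrightarrow> Inf_fin Y \<in> \<Union>\<G>"
  show "Inf_fin X \<in> \<Union>\<G>"
  proof (rule ccontr)
    assume "Inf_fin X \<notin> \<Union>\<G>"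
    have "\<exists>x\<in>X. x \<notin> G" if "G \<in> \<G>" for G
    proof (rule ccontr)
      assume "\<not> (\<exists>x\<in>X. x \<notin> G)"
      then have "Inf_fin X \<in> G"
        using filter_Inf_fin_mem[OF assms(3)[OF that]] X by blast
      then show False using \<open>Inf_fin X \<notin> \<Union>\<G>\<close> that by blast
    qed
    then obtain w where w: "\<And>G. G \<in> \<G> \<Longrightarrow> w G \<in> X \<and> w G \<notin> G" by metis
    have "\<G> \<noteq> {}" using X by auto
    then have "w ` \<G> \<subseteq> X" "w ` \<G> \<noteq> {}" "card (w ` \<G>) \<le> n"
      using w assms(2) card_image_le[OF assms(1), of w] by auto
    then obtain G where G: "G \<in> \<G>" "Inf_fin (w ` \<G>) \<in> G" using small by blast
    have "Inf_fin (w ` \<G>) \<le> w G"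
      using G(1) assms(1) by (simp add: Inf_fin.coboundedI)
    moreover have "upset G" using assms(3)[OF G(1)] by (simp add: is_filter_iff)
    ultimately have "w G \<in> G" using G(2) upsetD by blast
    then show False using w G(1) by blast
  qed
qed

lemma Diff_singleton_nonempty_if_card_ge_2: "2 \<le> card A \<Longrightarrow> A - {a} \<noteq> {}"
  by (metis Diff_empty Diff_insert0 card_insert_le insert_Diff is_singletonI
      is_singleton_altdef le_trans numeral_le_one_iff semiring_norm(69))

lemma ex_pairwise_separating:
  fixes F :: "'a::lattice set"
  assumes "finite \<N>" "2 \<le> card \<N>" "\<And>K. K \<in> \<N> \<Longrightarrow> is_filter K"
    and incompatible: "\<And>K K'. K \<in> \<N> \<Longrightarrow> K' \<in> \<N> \<Longrightarrow> K \<noteq> K' \<Longrightarrow> \<exists>c\<in>K. \<exists>d\<in>K'. inf c d \<notin> F"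
    and "upset F"
  obtains z where "\<And>K. K \<in> \<N> \<Longrightarrow> z K \<in> K"
    "\<And>K K'. K \<in> \<N> \<Longrightarrow> K' \<in> \<N> \<Longrightarrow> K \<noteq> K' \<Longrightarrow> inf (z K) (z K') \<notin> F"
proof -
  have "\<forall>K K'. \<exists>c d. K \<in> \<N> \<and> K' \<in> \<N> \<and> K \<noteq> K' \<longrightarrow> c \<in> K \<and> d \<in> K' \<and> inf c d \<notin> F"
    using incompatible by blast
  then obtain c d where cd: "\<And>K K'. K \<in> \<N> \<Longrightarrow> K' \<in> \<N> \<Longrightarrow> K \<noteq> K' \<Longrightarrow>
      c K K' \<in> K \<and> d K K' \<in> K' \<and> inf (c K K') (d K K') \<notin> F"
    by metis
  define S where "S K = c K ` (\<N> - {K}) \<union> (\<lambda>K'. d K' K) ` (\<N> - {K})" for K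
  define z where "z K = Inf_fin (S K)" for K
  have "\<N> - {K} \<noteq> {}" for K
    using assms(2) by (rule Diff_singleton_nonempty_if_card_ge_2)
  then have S: "finite (S K)" "S K \<noteq> {}" for K
    using assms(1) by (auto simp: S_def)
  have "z K \<in> K" if "K \<in> \<N>" for K
  proof -
    have "S K \<subseteq> K" using cd that by (auto simp: S_def)
    then show ?thesis
      unfolding z_def by (rule filter_Inf_fin_mem[OF assms(3)[OF that] S])
  qed
  moreover have "inf (z K) (z K') \<notin> F" if "K \<in> \<N>" "K' \<in> \<N>" "K \<noteq> K'" for K K'
  proof
    assume "inf (z K) (z K') \<in> F"
    moreover have "z K \<le> c K K'" "z K' \<le> d K K'"
      using that S unfolding z_def by (auto simp: S_def intro!: Inf_fin.coboundedI)
    then have "inf (z K) (z K') \<le> inf (c K K') (d K K')" by (rule inf_mono)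
    ultimately have "inf (c K K') (d K K') \<in> F" by (rule upsetD[OF assms(5)])
    then show False using cd[OF that] by simp
  qed
  ultimately show ?thesis by (rule that)
qed

lemma Inf_fin_Sup_fin_others_notin:
  fixes F :: "'a::distrib_lattice set" and z :: "'i \<Rightarrow> 'a"
  assumes "prime_upset F" "finite I" "2 \<le> card I"
    and separated: "\<And>i j. i \<in> I \<Longrightarrow> j \<in> I \<Longrightarrow> i \<noteq> j \<Longrightarrow> inf (z i) (z j) \<notin> F"
  shows "Inf_fin ((\<lambda>i. Sup_fin (z ` (I - {i}))) ` I) \<notin> F"
proof
  let ?y = "\<lambda>i. Sup_fin (z ` (I - {i}))"
  have F: "upset F" using assms(1) by (simp add: prime_upset_def)
  assume "Inf_fin (?y ` I) \<in> F"
  then have "{Inf_fin (?y ` I)..} \<subseteq> F" using upsetD[OF F] by auto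
  then obtain M where M: "max_subfilter F M" "{Inf_fin (?y ` I)..} \<subseteq> M"
    by (rule ex_max_subfilter[OF is_filter_atLeast])
  have "prime_filter M" "M \<subseteq> F"
    using max_subfilter_prime[OF assms(1) M(1)] M(1) by (simp_all add: max_subfilter_def)
  then have M_inf: "inf a b \<in> F" if "a \<in> M" "b \<in> M" for a b
    using that by (auto simp: prime_filter_def is_filter_iff)
  have others: "\<exists>j\<in>I - {i}. z j \<in> M" if "i \<in> I" for i
  proof -
    have "Inf_fin (?y ` I) \<le> ?y i" using that assms(2) by (simp add: Inf_fin.coboundedI)
    then have "?y i \<in> M" using M(2) by auto
    moreover have "prime_upset M" using \<open>prime_filter M\<close> by (simp add: prime_filter_def)
    ultimately show ?thesis
      using prime_upset_Sup_fin[of M "z ` (I - {i})"] Diff_singleton_nonempty_if_card_ge_2[OF assms(3)]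
        assms(2) by blast
  qed
  obtain i0 where "i0 \<in> I" using assms(3) by fastforce
  then obtain i1 where "i1 \<in> I - {i0}" "z i1 \<in> M" using others by blast
  then obtain i2 where "i2 \<in> I - {i1}" "z i2 \<in> M" using others by blast
  then show False using separated M_inf \<open>i1 \<in> I - {i0}\<close> \<open>z i1 \<in> M\<close> by blast
qed

lemma Sup_fin_others_mem_iff:
  fixes F :: "'a::lattice set"
  assumes "finite \<K>" "2 \<le> card \<K>" "\<And>K. K \<in> \<K> \<Longrightarrow> prime_filter K \<and> K \<subseteq> F"
    and z: "\<And>K. K \<in> \<K> \<Longrightarrow> z K \<in> K"
    "\<And>K K'. K \<in> \<K> \<Longrightarrow> K' \<in> \<K> \<Longrightarrow> K \<noteq> K' \<Longrightarrow> inf (z K) (z K') \<notin> F"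
    and "K \<in> \<K>" "K' \<in> \<K>"
  shows "Sup_fin (z ` (\<K> - {K})) \<in> K' \<longleftrightarrow> K' \<noteq> K"
proof
  assume "K' \<noteq> K"
  then have "z K' \<le> Sup_fin (z ` (\<K> - {K}))"
    using assms(1,7) by (simp add: Sup_fin.coboundedI)
  moreover have "upset K'" using assms(3)[OF assms(7)] by (simp add: prime_filter_def is_filter_iff)
  ultimately show "Sup_fin (z ` (\<K> - {K})) \<in> K'" using z(1)[OF assms(7)] upsetD by blast
next
  assume "Sup_fin (z ` (\<K> - {K})) \<in> K'"
  show "K' \<noteq> K"
  proof
    assume "K' = K"
    have "prime_filter K" "K \<subseteq> F" using assms(3,6) by blast+
    then obtain K'' where "K'' \<in> \<K> - {K}" "z K'' \<in> K"
      using prime_upset_Sup_fin[of K "z ` (\<K> - {K})"] \<open>Sup_fin (z ` (\<K> - {K})) \<in> K'\<close> \<open>K' = K\<close>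
        assms(1) Diff_singleton_nonempty_if_card_ge_2[OF assms(2)]
      by (auto simp: prime_filter_def)
    then have "inf (z K) (z K'') \<in> F"
      using z(1)[OF assms(6)] \<open>prime_filter K\<close> \<open>K \<subseteq> F\<close> filter_inf_iff
      by (auto simp: prime_filter_def)
    then show False using z(2)[OF assms(6)] \<open>K'' \<in> \<K> - {K}\<close> by blast
  qed
qed

lemma card_max_subfilters_le:
  fixes F :: "'a::distrib_lattice set"
  assumes "1 \<le> n" "prime_n_filter n F" "finite \<N>" "\<And>K. K \<in> \<N> \<Longrightarrow> max_subfilter F K"
  shows "card \<N> \<le> n"
proof (rule ccontr)
  assume "\<not> card \<N> \<le> n"
  then obtain \<K> where \<K>: "\<K> \<subseteq> \<N>" "card \<K> = Suc n" "finite \<K>"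
    by (metis not_less_eq_eq obtain_subset_with_card_n)
  have F: "n_filter n F" "prime_upset F" "upset F"
    using assms(2) by (simp_all add: prime_n_filter_def prime_upset_def)
  have K: "max_subfilter F K" "prime_filter K \<and> K \<subseteq> F" if "K \<in> \<K>" for K
    using assms(4) max_subfilter_prime[OF F(2)] that \<K>(1) by (auto simp: max_subfilter_def)
  have "2 \<le> card \<K>" using assms(1) \<K>(2) by simp
  obtain z where z: "\<And>K. K \<in> \<K> \<Longrightarrow> z K \<in> K"
    "\<And>K K'. K \<in> \<K> \<Longrightarrow> K' \<in> \<K> \<Longrightarrow> K \<noteq> K' \<Longrightarrow> inf (z K) (z K') \<notin> F"
    by (rule ex_pairwise_separating[OF \<K>(3) \<open>2 \<le> card \<K>\<close> _ max_subfilters_incompatible[OF F(3)] F(3)])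
      (use K in \<open>auto simp: max_subfilter_def\<close>)
  define y where "y K = Sup_fin (z ` (\<K> - {K}))" for K
  have y: "y K \<in> K' \<longleftrightarrow> K' \<noteq> K" if "K \<in> \<K>" "K' \<in> \<K>" for K K'
    unfolding y_def using Sup_fin_others_mem_iff[OF \<K>(3) \<open>2 \<le> card \<K>\<close> K(2) z that] .
  have "inj_on y \<K>" using y by (metis inj_onI)
  then have X: "card (y ` \<K>) = Suc n" "finite (y ` \<K>)" "y ` \<K> \<noteq> {}"
    using \<K>(2,3) card_image by fastforce+
  have "Inf_fin Y \<in> F" if Y: "Y \<subseteq> y ` \<K>" "Y \<noteq> {}" "card Y \<le> n" for Y
  proof -
    have "Y \<noteq> y ` \<K>" using Y(3) X(1) by auto
    then obtain K where K_in: "K \<in> \<K>" and "y K \<notin> Y" using Y(1) by blast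
    then have "Y \<subseteq> K" using Y(1) y by blast
    then have "Inf_fin Y \<in> K"
      using filter_Inf_fin_mem K(2)[OF K_in] finite_subset[OF Y(1) X(2)] Y(2)
      by (auto simp: prime_filter_def)
    then show ?thesis using K(2)[OF K_in] by blast
  qed
  moreover have "y ` \<K> \<subseteq> F"
  proof
    fix x assume "x \<in> y ` \<K>"
    then obtain K where "K \<in> \<K>" "x = y K" by blast
    moreover obtain K' where "K' \<in> \<K> - {K}"
      using Diff_singleton_nonempty_if_card_ge_2[OF \<open>2 \<le> card \<K>\<close>] by blast
    ultimately show "x \<in> F" using y K(2) by blast
  qed
  ultimately have "Inf_fin (y ` \<K>) \<in> F" using F(1) X unfolding n_filter_def by blast
  then show False
    using Inf_fin_Sup_fin_others_notin[OF F(2) \<K>(3) \<open>2 \<le> card \<K>\<close> z(2)] by (simp add: y_def)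
qed

definition union_of_at_most :: "nat \<Rightarrow> ('a set \<Rightarrow> bool) \<Rightarrow> 'a set \<Rightarrow> bool" where
  "union_of_at_most n P F \<longleftrightarrow> (\<exists>\<G>. finite \<G> \<and> card \<G> \<le> n \<and> (\<forall>G\<in>\<G>. P G) \<and> F = \<Union>\<G>)"

lemma union_of_at_most_mono:
  "(\<And>G. P G \<Longrightarrow> Q G) \<Longrightarrow> union_of_at_most n P F \<Longrightarrow> union_of_at_most n Q F"
  unfolding union_of_at_most_def by blast

lemma prime_n_filter_if_union_prime_filters:
  fixes F :: "'a::lattice set"
  assumes "union_of_at_most n prime_filter F"
  shows "prime_n_filter n F"
proof -
  obtain \<G> where "finite \<G>" "card \<G> \<le> n" "\<forall>G\<in>\<G>. prime_filter G" "F = \<Union>\<G>"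
    using assms unfolding union_of_at_most_def by blast
  then show ?thesis
    unfolding prime_n_filter_def prime_filter_def
    using n_filter_Union_filters prime_upset_Union by blast
qed

lemma union_prime_filters_if_union_filters:
  fixes F :: "'a::distrib_lattice set"
  assumes "prime_upset F" "union_of_at_most n is_filter F"
  shows "union_of_at_most n prime_filter F"
proof -
  obtain \<G> where \<G>: "finite \<G>" "card \<G> \<le> n" "\<forall>G\<in>\<G>. is_filter G" "F = \<Union>\<G>"
    using assms(2) unfolding union_of_at_most_def by blast
  have "\<exists>H. max_subfilter F H \<and> G \<subseteq> H" if "G \<in> \<G>" for G
    using ex_max_subfilter[of G F] \<G>(3,4) that by blast
  then obtain m where m: "\<And>G. G \<in> \<G> \<Longrightarrow> max_subfilter F (m G) \<and> G \<subseteq> m G" by metis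
  have "finite (m ` \<G>)" "card (m ` \<G>) \<le> n"
    using \<G>(1,2) card_image_le[OF \<G>(1), of m] by auto
  moreover have "\<forall>H\<in>m ` \<G>. prime_filter H" using m max_subfilter_prime[OF assms(1)] by blast
  moreover have "F = \<Union>(m ` \<G>)" using m \<G>(4) unfolding max_subfilter_def by blast
  ultimately show ?thesis unfolding union_of_at_most_def by blast
qed

lemma union_prime_filters_if_prime_n_filter:
  fixes F :: "'a::distrib_lattice set"
  assumes "1 \<le> n" "prime_n_filter n F"
  shows "union_of_at_most n prime_filter F"
proof -
  have F: "prime_upset F" "upset F" using assms(2) by (simp_all add: prime_n_filter_def prime_upset_def)
  have "finite {H. max_subfilter F H} \<and> card {H. max_subfilter F H} \<le> n"
    by (rule finite_if_finite_subsets_card_bdd) (use card_max_subfilters_le[OF assms] in blast)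
  moreover have "\<forall>H\<in>{H. max_subfilter F H}. prime_filter H" using max_subfilter_prime[OF F(1)] by blast
  ultimately show ?thesis
    unfolding union_of_at_most_def using Union_max_subfilters[OF F(2)] by (metis (no_types))
qed

lemma P_set_iff: "f \<in> two_pow n \<Longrightarrow> f \<in> P_set n \<longleftrightarrow> (\<exists>i<n. f i)"
  unfolding P_set_def two_pow_def by (auto simp: fun_eq_iff) (metis not_le)

lemma hom_two_pow_if_union_prime_filters:
  fixes F :: "'a::lattice set"
  assumes "union_of_at_most n prime_filter F"
  shows "\<exists>h. lattice_hom_to_two_pow n h \<and> F = h -` P_set n"
proof -
  obtain \<G> where \<G>: "finite \<G>" "card \<G> \<le> n" "\<forall>G\<in>\<G>. prime_filter G" "F = \<Union>\<G>"
    using assms unfolding union_of_at_most_def by blast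
  obtain g where g: "bij_betw g {..<card \<G>} \<G>"
    using ex_bij_betw_nat_finite[OF \<G>(1)] by (auto simp: atLeast0LessThan)
  then have \<G>_eq: "\<G> = g ` {..<card \<G>}" by (simp add: bij_betw_def)
  have "prime_filter (g i)" if "i < card \<G>" for i
    using \<G>(3) \<G>_eq that by blast
  then have G: "inf a b \<in> g i \<longleftrightarrow> a \<in> g i \<and> b \<in> g i" "sup a b \<in> g i \<longleftrightarrow> a \<in> g i \<or> b \<in> g i"
    if "i < card \<G>" for i a b
    using that filter_inf_iff prime_upset_sup_iff unfolding prime_filter_def by blast+
  define h where "h a = (\<lambda>i. i < card \<G> \<and> a \<in> g i)" for a
  have two_pow: "h a \<in> two_pow n" for a
    using \<G>(2) by (auto simp: h_def two_pow_def)
  moreover have "h (sup a b) = sup (h a) (h b)" "h (inf a b) = inf (h a) (h b)" for a b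
    using G by (auto simp: h_def fun_eq_iff)
  moreover have "a \<in> F \<longleftrightarrow> h a \<in> P_set n" for a
  proof -
    have "a \<in> F \<longleftrightarrow> (\<exists>i<card \<G>. a \<in> g i)" using \<G>(4) \<G>_eq by auto
    also have "\<dots> \<longleftrightarrow> (\<exists>i<n. h a i)" using \<G>(2) by (auto simp: h_def intro: less_le_trans)
    finally show ?thesis using P_set_iff[OF two_pow] by simp
  qed
  then have "F = h -` P_set n" by auto
  ultimately show ?thesis unfolding lattice_hom_to_two_pow_def by blast
qed

lemma prime_filter_hom_coordinate:
  fixes h :: "'a::lattice \<Rightarrow> nat \<Rightarrow> bool"
  assumes "lattice_hom_to_two_pow n h"
  shows "prime_filter {a. h a i}"
proof -
  have sup: "h (sup a b) = sup (h a) (h b)" and inf: "h (inf a b) = inf (h a) (h b)" for a b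
    using assms unfolding lattice_hom_to_two_pow_def by blast+
  have "h b i" if "h a i" "a \<le> b" for a b
    using that sup[of a b] by (metis sup.absorb2 sup_apply sup_bool_def)
  then show ?thesis
    unfolding prime_filter_def prime_upset_def is_filter_iff upset_def by (simp add: sup inf)
qed

lemma union_prime_filters_if_hom_two_pow:
  fixes F :: "'a::lattice set"
  assumes "lattice_hom_to_two_pow n h" "F = h -` P_set n"
  shows "union_of_at_most n prime_filter F"
proof -
  define \<G> where "\<G> = (\<lambda>i. {a. h a i}) ` {..<n}"
  have "finite \<G>" "card \<G> \<le> n"
    unfolding \<G>_def using card_image_le[of "{..<n}"] by auto
  moreover have "\<forall>G\<in>\<G>. prime_filter G"
    unfolding \<G>_def using prime_filter_hom_coordinate[OF assms(1)] by blast
  moreover have "h a \<in> two_pow n" for a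
    using assms(1) by (simp add: lattice_hom_to_two_pow_def)
  then have "F = \<Union>\<G>"
    using P_set_iff by (auto simp: assms(2) \<G>_def)
  ultimately show ?thesis unfolding union_of_at_most_def by blast
qed

theorem mainTheorem5:
  fixes F :: "'a::distrib_lattice set" and n :: nat
  assumes "n \<ge> 1" and "upset F"
  shows "(prime_n_filter n F \<longleftrightarrow>
            (prime_upset F \<and> (\<exists>\<G>. finite \<G> \<and> card \<G> \<le> n \<and> (\<forall>G\<in>\<G>. is_filter G) \<and> F = \<Union>\<G>)))
       \<and> ((prime_upset F \<and> (\<exists>\<G>. finite \<G> \<and> card \<G> \<le> n \<and> (\<forall>G\<in>\<G>. is_filter G) \<and> F = \<Union>\<G>)) \<longleftrightarrow>
            (\<exists>\<G>. finite \<G> \<and> card \<G> \<le> n \<and> (\<forall>G\<in>\<G>. prime_filter G) \<and> F = \<Union>\<G>))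
       \<and> ((\<exists>\<G>. finite \<G> \<and> card \<G> \<le> n \<and> (\<forall>G\<in>\<G>. prime_filter G) \<and> F = \<Union>\<G>) \<longleftrightarrow>
            (\<exists>h. lattice_hom_to_two_pow n h \<and> F = h -` P_set n))"
proof -
  have i_iii: "prime_n_filter n F \<longleftrightarrow> union_of_at_most n prime_filter F"
    using prime_n_filter_if_union_prime_filters union_prime_filters_if_prime_n_filter[OF assms(1)]
    by blast
  have ii_iii: "prime_upset F \<and> union_of_at_most n is_filter F \<longleftrightarrow> union_of_at_most n prime_filter F"
    using union_prime_filters_if_union_filters i_iii union_of_at_most_mono[of prime_filter is_filter]
    by (auto simp: prime_n_filter_def prime_filter_def)
  have iii_iv: "union_of_at_most n prime_filter F \<longleftrightarrow> (\<exists>h. lattice_hom_to_two_pow n h \<and> F = h -` P_set n)"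
    using hom_two_pow_if_union_prime_filters union_prime_filters_if_hom_two_pow by blast
  from i_iii ii_iii iii_iv show ?thesis
    unfolding union_of_at_most_def by blast
qed

end
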